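(* In the setting of the context, for $i\in\{1,2\}$ and $\lambda>0$ let $\mathbf s_i(\lambda)=\big(\mathbf X_{s,1}\otimes\mathbf X_{s,2,i}+\lambda\mathbf I\big)^{-1}\mathbf x_{s,3,i}$ and $g(\lambda)=\mathrm{Tr}(\mathbf s_i(\lambda)\mathbf s_i(\lambda)^H)=\|\mathbf s_i(\lambda)\|_2^2$ (which equals $\mathrm{Tr}(\mathbf S_i\mathbf S_i^H)$ for $\mathbf s_i=\mathrm{vec}(\mathbf S_i)$). Then $g$ is monotonically non-increasing in $\lambda$, and if $\lambda_i>0$ satisfies $g(\lambda_i)=\tau_i$ (with $\tau_i>0$), then $$\lambda_i\le\sqrt{\frac{\sigma_{s,3,i}}{\tau_i}}-\sigma_{s,\min,i},$$ where $\sigma_{s,3,i}=\|\mathbf x_{s,3,i}\|_2^2$ and $\sigma_{s,\min,i}$ is the smallest eigenvalue of $\mathbf X_{s,1}\otimes\mathbf X_{s,2,i}$.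
   Context: MAC phase of a MIMO two-way relay system (sources with $N_1,N_2$ antennas, relay with $M$ antennas, training length $L_S$). Let $\mathbf Z_{t,H_i}\in\mathbb C^{N_i\times N_i}$ ($i=1,2$) be Hermitian positive definite with $\mathbf Z_{t,H_i}=\mathbf C_{t,H_i}\mathbf C_{t,H_i}^H$, $\mathbf C_{t,H}=\mathrm{Blkdiag}(\mathbf C_{t,H_1},\mathbf C_{t,H_2})$; let $\mathbf K_{q,R}\in\mathbb C^{L_S\times L_S}$ be Hermitian positive definite (temporal disturbance covariance at the relay; here the spatial disturbance covariance equals the receive channel covariance, $\mathbf K_{r,R}=\mathbf Z_{r,H}$). Given any $\mathbf S\in\mathbb C^{(N_1+N_2)\times L_S}$ (current training), define $\mathbf T_{R,1}=\mathbf C_{t,H}^H\mathbf S^*\big(\mathbf S^T\mathbf C_{t,H}\mathbf C_{t,H}^H\mathbf S^*+\mathbf K_{q,R}\big)^{-1}\in\mathbb C^{(N_1+N_2)\times L_S}$, let $\mathbf T_{R,1,1}$ be its first $N_1$ rows and $\mathbf T_{R,1,2}$ its last $N_2$ rows, and set $\mathbf X_{s,1}=\mathbf T_{R,1}^H\mathbf C_{t,H}^H\mathbf C_{t,H}\mathbf T_{R,1}$, $\mathbf X_{s,2,i}=\mathbf Z_{t,H_i}^T$, $\mathbf x_{s,3,i}=\mathrm{vec}\big((\mathbf T_{R,1,i}^H\mathbf C_{t,H_i}^H\mathbf Z_{t,H_i}^H)^T\big)$. *)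

theory Defs
  imports "Jordan_Normal_Form.Schur_Decomposition" "Jordan_Normal_Form.Char_Poly"
begin

definition conj_mat :: "complex mat \<Rightarrow> complex mat" where
  "conj_mat A = map_mat cnj A"

(* inverse of a square matrix (all matrices inverted below are invertible) *)
definition mat_inv :: "complex mat \<Rightarrow> complex mat" where
  "mat_inv A = (SOME B. B \<in> carrier_mat (dim_row A) (dim_row A) \<and> inverts_mat A B \<and> inverts_mat B A)"

definition hermitian_pd :: "complex mat \<Rightarrow> nat \<Rightarrow> bool" where
  "hermitian_pd A n \<longleftrightarrow> A \<in> carrier_mat n n \<and> mat_adjoint A = A \<and>
     (\<forall>v \<in> carrier_vec n. v \<noteq> 0\<^sub>v n \<longrightarrow> Re (scalar_prod (conjugate v) (A *\<^sub>v v)) > 0)"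

definition kron :: "complex mat \<Rightarrow> complex mat \<Rightarrow> complex mat" where
  "kron A B = mat (dim_row A * dim_row B) (dim_col A * dim_col B)
     (\<lambda>(i,j). A $$ (i div dim_row B, j div dim_col B) * B $$ (i mod dim_row B, j mod dim_col B))"

definition vec_mat :: "complex mat \<Rightarrow> complex vec" where
  "vec_mat A = vec (dim_row A * dim_col A) (\<lambda>k. A $$ (k mod dim_row A, k div dim_row A))"

definition row_block :: "complex mat \<Rightarrow> nat \<Rightarrow> nat \<Rightarrow> complex mat" where
  "row_block A r n = mat n (dim_col A) (\<lambda>(i,j). A $$ (r + i, j))"

definition blkdiag :: "complex mat \<Rightarrow> complex mat \<Rightarrow> complex mat" where
  "blkdiag A B = four_block_mat A (0\<^sub>m (dim_row A) (dim_col B)) (0\<^sub>m (dim_row B) (dim_col A)) B"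

definition sq_norm_cvec :: "complex vec \<Rightarrow> real" where
  "sq_norm_cvec v = (\<Sum>k<dim_vec v. (cmod (v $ k))\<^sup>2)"

(* smallest eigenvalue of a (Hermitian, hence real-spectrum) matrix *)
definition min_eigenvalue :: "complex mat \<Rightarrow> real" where
  "min_eigenvalue A = Min {x::real. eigenvalue A (complex_of_real x)}"

end

theory Submission
  imports Defs
begin

text \<open>
  Both factors of the Kronecker product are Gram matrices: \<open>X\<^sub>s\<^sub>,\<^sub>1 = (C\<^sub>H T)\<^sup>H (C\<^sub>H T)\<close> and
  \<open>Z\<^sup>T = (C\<^sup>T)\<^sup>H C\<^sup>T\<close>, so \<open>A = X\<^sub>s\<^sub>,\<^sub>1 \<otimes> X\<^sub>s\<^sub>,\<^sub>2\<close> is the Gram matrix of \<open>(C\<^sub>H T) \<otimes> C\<^sup>T\<close>,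
  then have Hermitian positive semidefinite, and \<open>s(\<lambda>)\<close> is the solution of \<open>(A + \<lambda>I) s = x\<close>.
  For \<open>\<lambda>\<^sub>1 \<le> \<lambda>\<^sub>2\<close> the difference \<open>w = s(\<lambda>\<^sub>1) - s(\<lambda>\<^sub>2)\<close> satisfies
  \<open>(A + \<lambda>\<^sub>1 I) w = (\<lambda>\<^sub>2 - \<lambda>\<^sub>1) s(\<lambda>\<^sub>2)\<close>, so \<open>Re \<langle>s(\<lambda>\<^sub>2), w\<rangle> \<ge> 0\<close> and
  \<open>\<parallel>s(\<lambda>\<^sub>1)\<parallel>\<^sup>2 = \<parallel>s(\<lambda>\<^sub>2)\<parallel>\<^sup>2 + 2 Re \<langle>s(\<lambda>\<^sub>2), w\<rangle> + \<parallel>w\<parallel>\<^sup>2\<close> gives monotonicity.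
  For the bound, the smallest eigenvalue \<open>\<sigma> \<ge> 0\<close> of \<open>A\<close> is a lower bound of the Rayleigh quotient
  (proved by unitary deflation and induction on the dimension), which yields
  \<open>\<parallel>x\<parallel> = \<parallel>(A + \<lambda>I) s(\<lambda>)\<parallel> \<ge> (\<sigma> + \<lambda>) \<parallel>s(\<lambda>)\<parallel>\<close>.
\<close>

section \<open>Adjoints, squared norms and Gram matrices\<close>

lemma mat_adjoint_altdef:
  "mat_adjoint (A :: complex mat) = mat (dim_col A) (dim_row A) (\<lambda>(i,j). cnj (A $$ (j,i)))"
  by (rule eq_matI) (auto simp: mat_adjoint_def mat_of_rows_def)

lemma dim_mat_adjoint [simp]:
  "dim_row (mat_adjoint (A :: complex mat)) = dim_col A"
  "dim_col (mat_adjoint (A :: complex mat)) = dim_row A"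
  by (simp_all add: mat_adjoint_altdef)

lemma index_mat_adjoint [simp]:
  "i < dim_col A \<Longrightarrow> j < dim_row A \<Longrightarrow> mat_adjoint (A :: complex mat) $$ (i,j) = cnj (A $$ (j,i))"
  by (simp add: mat_adjoint_altdef)

lemma mat_adjoint_carrier [simp]:
  "(A :: complex mat) \<in> carrier_mat r c \<Longrightarrow> mat_adjoint A \<in> carrier_mat c r"
  by auto

lemma mat_adjoint_mat_adjoint [simp]: "mat_adjoint (mat_adjoint (A :: complex mat)) = A"
  by (rule eq_matI) auto

lemma mat_adjoint_mult:
  fixes A B :: "complex mat"
  assumes "A \<in> carrier_mat n k" "B \<in> carrier_mat k m"
  shows "mat_adjoint (A * B) = mat_adjoint B * mat_adjoint A"
  using assms by (intro eq_matI) (auto simp: scalar_prod_def mult.commute)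

lemma mat_adjoint_conj_mat: "mat_adjoint (conj_mat S) = transpose_mat S"
  by (rule eq_matI) (auto simp: conj_mat_def)

lemma conj_mat_carrier: "S \<in> carrier_mat r c \<Longrightarrow> conj_mat S \<in> carrier_mat r c"
  by (simp add: conj_mat_def)

lemma transpose_mult_mat_adjoint:
  fixes C :: "complex mat"
  assumes "C \<in> carrier_mat n k"
  shows "transpose_mat (C * mat_adjoint C) = mat_adjoint (transpose_mat C) * transpose_mat C"
  using assms by (intro eq_matI) (auto simp: scalar_prod_def mult.commute)

lemma mat_adjoint_mult_self:
  fixes A B :: "complex mat"
  assumes A: "A \<in> carrier_mat n k" and B: "B \<in> carrier_mat k m"
  shows "mat_adjoint B * mat_adjoint A * A * B = mat_adjoint (A * B) * (A * B)"
proof -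
  have "mat_adjoint B * mat_adjoint A \<in> carrier_mat m n"
    using A B by (intro mult_carrier_mat[of _ m k]) auto
  then show ?thesis by (simp add: mat_adjoint_mult[OF A B] assoc_mult_mat[OF _ A B])
qed

lemma hermitian_index:
  fixes A :: "complex mat"
  assumes "A \<in> carrier_mat n n" "mat_adjoint A = A" "i < n" "j < n"
  shows "A $$ (i,j) = cnj (A $$ (j,i))"
  by (metis assms index_mat_adjoint carrier_matD)

lemma scalar_prod_mat_adjoint:
  fixes U :: "complex mat"
  assumes U: "U \<in> carrier_mat r c" and z: "z \<in> carrier_vec c" and w: "w \<in> carrier_vec r"
  shows "conjugate (U *\<^sub>v z) \<bullet> w = conjugate z \<bullet> (mat_adjoint U *\<^sub>v w)"
proof -
  have "conjugate (U *\<^sub>v z) \<bullet> w = (\<Sum>i<r. \<Sum>j<c. cnj (U $$ (i,j)) * cnj (z $ j) * w $ i)"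
    using U z w by (simp add: scalar_prod_def sum_distrib_right atLeast0LessThan)
  also have "\<dots> = (\<Sum>j<c. \<Sum>i<r. cnj (U $$ (i,j)) * cnj (z $ j) * w $ i)"
    by (rule sum.swap)
  also have "\<dots> = conjugate z \<bullet> (mat_adjoint U *\<^sub>v w)"
    using U z w by (simp add: scalar_prod_def sum_distrib_left atLeast0LessThan ac_simps)
  finally show ?thesis .
qed

lemma conjugate_scalar_prod_self: "conjugate v \<bullet> v = complex_of_real (sq_norm_cvec v)"
proof -
  have "conjugate v \<bullet> v = (\<Sum>i<dim_vec v. complex_of_real ((cmod (v$i))\<^sup>2))"
    unfolding scalar_prod_def
    by (simp add: atLeast0LessThan complex_norm_square mult.commute del: of_real_power)
  then show ?thesis by (simp add: sq_norm_cvec_def del: of_real_power)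
qed

lemma sq_norm_cvec_nonneg: "sq_norm_cvec v \<ge> 0"
  by (simp add: sq_norm_cvec_def sum_nonneg)

lemma sq_norm_cvec_eq_0_iff:
  assumes "v \<in> carrier_vec n"
  shows "sq_norm_cvec v = 0 \<longleftrightarrow> v = 0\<^sub>v n"
proof
  assume "sq_norm_cvec v = 0"
  then have "\<forall>k\<in>{..<dim_vec v}. (cmod (v $ k))\<^sup>2 = 0"
    unfolding sq_norm_cvec_def by (subst sum_nonneg_eq_0_iff[symmetric]) auto
  then show "v = 0\<^sub>v n" using assms by (intro eq_vecI) auto
qed (auto simp: sq_norm_cvec_def)

lemma sq_norm_cvec_pos: "v \<in> carrier_vec n \<Longrightarrow> v \<noteq> 0\<^sub>v n \<Longrightarrow> sq_norm_cvec v > 0"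
  using sq_norm_cvec_eq_0_iff sq_norm_cvec_nonneg by (metis less_eq_real_def)

lemma sq_norm_cvec_add_smult:
  assumes a: "a \<in> carrier_vec n" and b: "b \<in> carrier_vec n"
  shows "sq_norm_cvec (a + complex_of_real c \<cdot>\<^sub>v b) =
    sq_norm_cvec a + 2 * c * Re (conjugate a \<bullet> b) + c\<^sup>2 * sq_norm_cvec b"
proof -
  have "(cmod (x + complex_of_real c * y))\<^sup>2 = (cmod x)\<^sup>2 + 2 * c * Re (cnj x * y) + c\<^sup>2 * (cmod y)\<^sup>2"
    for x y
    unfolding cmod_power2 by (simp add: power2_eq_square algebra_simps)
  with a b show ?thesis
    by (simp add: sq_norm_cvec_def scalar_prod_def sum.distrib sum_distrib_left
        atLeast0LessThan distrib_left)
qed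

lemma Re_conjugate_scalar_prod_commute:
  "a \<in> carrier_vec n \<Longrightarrow> b \<in> carrier_vec n \<Longrightarrow> Re (conjugate a \<bullet> b) = Re (conjugate b \<bullet> a)"
  by (simp add: scalar_prod_def atLeast0LessThan mult.commute)

lemma gram_quadratic_form:
  fixes G :: "complex mat"
  assumes G: "G \<in> carrier_mat r c" and v: "v \<in> carrier_vec c"
  shows "Re (conjugate v \<bullet> ((mat_adjoint G * G) *\<^sub>v v)) = sq_norm_cvec (G *\<^sub>v v)"
proof -
  have "conjugate v \<bullet> ((mat_adjoint G * G) *\<^sub>v v) = conjugate (G *\<^sub>v v) \<bullet> (G *\<^sub>v v)"
    using scalar_prod_mat_adjoint[OF G v, of "G *\<^sub>v v"] G v
    by (simp add: assoc_mult_mat_vec[OF mat_adjoint_carrier[OF G] G v])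
  then show ?thesis by (simp add: conjugate_scalar_prod_self)
qed

lemma gram_carrier:
  fixes G :: "complex mat"
  shows "G \<in> carrier_mat r c \<Longrightarrow> mat_adjoint G * G \<in> carrier_mat c c"
  by (intro mult_carrier_mat[of _ c r]) auto

lemma gram_hermitian:
  fixes G :: "complex mat"
  assumes "G \<in> carrier_mat r c"
  shows "mat_adjoint (mat_adjoint G * G) = mat_adjoint G * G"
  using mat_adjoint_mult[OF mat_adjoint_carrier assms] assms by simp

lemma gram_psd:
  fixes G :: "complex mat"
  shows "G \<in> carrier_mat r c \<Longrightarrow> v \<in> carrier_vec c \<Longrightarrow> Re (conjugate v \<bullet> ((mat_adjoint G * G) *\<^sub>v v)) \<ge> 0"
  by (simp add: gram_quadratic_form sq_norm_cvec_nonneg)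

section \<open>Kronecker products\<close>

lemma sum_lessThan_mult: "(\<Sum>k<a * b. f k) = (\<Sum>i<a. \<Sum>j<b. f (i * b + j :: nat))"
proof -
  have "(\<Sum>k<a * b. f k) = (\<Sum>i<a. sum f {i * b..<i * b + b})"
    by (simp add: sum.nat_group)
  also have "\<dots> = (\<Sum>i<a. \<Sum>j<b. f (i * b + j))"
    by (simp add: sum.shift_bounds_nat_ivl[where m=0, simplified] add.commute atLeast0LessThan)
  finally show ?thesis .
qed

lemma kron_carrier [simp]:
  "A \<in> carrier_mat a b \<Longrightarrow> B \<in> carrier_mat c d \<Longrightarrow> kron A B \<in> carrier_mat (a * c) (b * d)"
  by (auto simp: kron_def)

lemma dim_kron [simp]:
  "dim_row (kron A B) = dim_row A * dim_row B"
  "dim_col (kron A B) = dim_col A * dim_col B"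
  by (auto simp: kron_def)

lemma index_kron [simp]:
  "i < dim_row A * dim_row B \<Longrightarrow> j < dim_col A * dim_col B \<Longrightarrow>
    kron A B $$ (i,j) = A $$ (i div dim_row B, j div dim_col B) * B $$ (i mod dim_row B, j mod dim_col B)"
  by (auto simp: kron_def)

lemma div_mod_less_mult:
  assumes "i < a * (b :: nat)"
  shows "i div b < a" "i mod b < b"
  using assms less_mult_imp_div_less by (auto, cases b, auto)

lemma mat_adjoint_kron: "mat_adjoint (kron A B) = kron (mat_adjoint A) (mat_adjoint B)"
proof (rule eq_matI)
  fix i j assume "i < dim_row (kron (mat_adjoint A) (mat_adjoint B))"
    and "j < dim_col (kron (mat_adjoint A) (mat_adjoint B))"
  then have i: "i < dim_col A * dim_col B" and j: "j < dim_row A * dim_row B" by auto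
  with div_mod_less_mult[OF i] div_mod_less_mult[OF j]
  show "mat_adjoint (kron A B) $$ (i, j) = kron (mat_adjoint A) (mat_adjoint B) $$ (i, j)"
    by simp
qed auto

lemma kron_mult:
  assumes A: "A \<in> carrier_mat a b" and B: "B \<in> carrier_mat c d"
    and C: "C \<in> carrier_mat b e" and D: "D \<in> carrier_mat d f"
  shows "kron A B * kron C D = kron (A * C) (B * D)"
proof (rule eq_matI)
  fix i j assume "i < dim_row (kron (A * C) (B * D))" and "j < dim_col (kron (A * C) (B * D))"
  then have i: "i < a * c" and j: "j < e * f" using A B C D by auto
  have kron_index_pair: "kron A B $$ (i, k * d + l) * kron C D $$ (k * d + l, j) =
      (A $$ (i div c, k) * C $$ (k, j div f)) * (B $$ (i mod c, l) * D $$ (l, j mod f))"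
    if k: "k < b" and l: "l < d" for k l
  proof -
    have "k * d + l < Suc k * d" using l by simp
    also have "\<dots> \<le> b * d" using k by (intro mult_le_mono1) simp
    finally have "k * d + l < b * d" .
    then show ?thesis using i j l A B C D by simp
  qed
  have "(kron A B * kron C D) $$ (i,j) = (\<Sum>k<b * d. kron A B $$ (i,k) * kron C D $$ (k,j))"
    using i j A B C D by (simp add: scalar_prod_def atLeast0LessThan)
  also have "\<dots> = (\<Sum>k<b. \<Sum>l<d. (A $$ (i div c, k) * C $$ (k, j div f)) *
      (B $$ (i mod c, l) * D $$ (l, j mod f)))"
    by (simp add: sum_lessThan_mult kron_index_pair)
  also have "\<dots> = (\<Sum>k<b. A $$ (i div c, k) * C $$ (k, j div f)) *
      (\<Sum>l<d. B $$ (i mod c, l) * D $$ (l, j mod f))"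
    by (simp add: sum_product)
  also have "\<dots> = kron (A * C) (B * D) $$ (i,j)"
    using i j A B C D div_mod_less_mult[OF i] div_mod_less_mult[OF j]
    by (simp add: scalar_prod_def atLeast0LessThan)
  finally show "(kron A B * kron C D) $$ (i,j) = kron (A * C) (B * D) $$ (i,j)" .
qed (use A B C D in auto)

lemma kron_gram:
  assumes "A \<in> carrier_mat a b" "B \<in> carrier_mat c d"
  shows "kron (mat_adjoint A * A) (mat_adjoint B * B) = mat_adjoint (kron A B) * kron A B"
  using assms by (simp add: mat_adjoint_kron kron_mult[of _ b a _ d c])

section \<open>The smallest eigenvalue of a Hermitian matrix\<close>

lemma corthogonal_normalize_unitary:
  fixes ws :: "complex vec list"
  assumes ws: "set ws \<subseteq> carrier_vec n" "corthogonal ws" "length ws = n"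
  obtains U where "U \<in> carrier_mat n n" "mat_adjoint U * U = 1\<^sub>m n"
    "\<And>i. i < n \<Longrightarrow> \<exists>c. c \<noteq> 0 \<and> col U i = c \<cdot>\<^sub>v ws ! i"
proof -
  have wsi: "ws ! i \<in> carrier_vec n" if "i < n" for i using ws that by auto
  have sqpos: "sq_norm_cvec (ws ! i) > 0" if i: "i < n" for i
  proof -
    have "ws ! i \<bullet>c ws ! i \<noteq> 0" using corthogonalD[OF ws(2), of i i] ws(3) i by auto
    then have "ws ! i \<noteq> 0\<^sub>v n" by auto
    then show ?thesis by (rule sq_norm_cvec_pos[OF wsi[OF i]])
  qed
  define r where "r i = complex_of_real (1 / sqrt (sq_norm_cvec (ws ! i)))" for i
  define us where "us = map (\<lambda>i. r i \<cdot>\<^sub>v ws ! i) [0..<n]"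
  define U where "U = mat_of_cols n us"
  have U: "U \<in> carrier_mat n n" unfolding U_def using mat_of_cols_carrier(1)[of n us] by (simp add: us_def)
  have colU: "col U i = r i \<cdot>\<^sub>v ws ! i" if "i < n" for i
    unfolding U_def us_def using that wsi by simp
  have "mat_adjoint U * U = 1\<^sub>m n"
  proof (rule eq_matI)
    fix i j assume "i < dim_row (1\<^sub>m n :: complex mat)" and "j < dim_col (1\<^sub>m n :: complex mat)"
    then have i: "i < n" and j: "j < n" by auto
    have "row (mat_adjoint U) i = conjugate (col U i)" using U i by (intro eq_vecI) auto
    then have "(mat_adjoint U * U) $$ (i,j) = conjugate (r i \<cdot>\<^sub>v ws ! i) \<bullet> (r j \<cdot>\<^sub>v ws ! j)"
      using U i j colU by simp
    also have "\<dots> = cnj (r i) * r j * (ws ! j \<bullet>c ws ! i)"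
      using wsi[OF i] wsi[OF j] conjugate_vec_sprod_comm[OF wsi[OF j] wsi[OF i]]
      by (simp add: conjugate_smult_vec)
    also have "\<dots> = 1\<^sub>m n $$ (i,j)"
    proof (cases "i = j")
      case True
      have "ws ! j \<bullet>c ws ! j = complex_of_real (sq_norm_cvec (ws ! j))"
        using conjugate_vec_sprod_comm[OF wsi[OF j] wsi[OF j]] conjugate_scalar_prod_self by simp
      moreover have "(1 / sqrt s) * (1 / sqrt s) * s = 1" if "s > 0" for s :: real
        using that by (simp add: field_simps)
      ultimately show ?thesis
        using sqpos[OF j] True i unfolding r_def by (simp flip: of_real_mult)
    next
      case False
      then have "ws ! j \<bullet>c ws ! i = 0" using corthogonalD[OF ws(2), of j i] ws(3) i j by auto
      then show ?thesis using False i j by simp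
    qed
    finally show "(mat_adjoint U * U) $$ (i,j) = 1\<^sub>m n $$ (i,j)" .
  qed (use U in auto)
  moreover have "r i \<noteq> 0" if "i < n" for i using sqpos[OF that] unfolding r_def by simp
  ultimately show ?thesis using U colU that by blast
qed

lemma unitary_completion:
  fixes v :: "complex vec"
  assumes v: "v \<in> carrier_vec n" and v0: "v \<noteq> 0\<^sub>v n"
  obtains U c where "U \<in> carrier_mat n n" "mat_adjoint U * U = 1\<^sub>m n" "c \<noteq> 0" "col U 0 = c \<cdot>\<^sub>v v"
proof -
  have n: "0 < n" using v v0 by (cases n) auto
  interpret cof_vec_space n "TYPE(complex)" .
  define b where "b = basis_completion v"
  define ws where "ws = gram_schmidt n b"
  from basis_completion[OF v v0, folded b_def]
  have dist_b: "distinct b" and indep: "\<not> lin_dep (set b)" and b: "set b \<subseteq> carrier_vec n"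
    and hdb: "hd b = v" and len_b: "length b = n" by auto
  from hdb len_b n obtain vs where bv: "b = v # vs" by (cases b) auto
  from gram_schmidt_result[OF b dist_b indep refl, folded ws_def]
  have ws: "set ws \<subseteq> carrier_vec n" "corthogonal ws" "length ws = n"
    by (auto simp: len_b)
  have "ws ! 0 = v"
    using gram_schmidt_hd[OF v, of vs, folded bv ws_def] ws n by (cases ws) auto
  with corthogonal_normalize_unitary[OF ws] n that show ?thesis by metis
qed

lemma unitary_right_inverse:
  fixes U :: "complex mat"
  assumes "U \<in> carrier_mat n n" "mat_adjoint U * U = 1\<^sub>m n"
  shows "U * mat_adjoint U = 1\<^sub>m n"
  by (rule mat_mult_left_right_inverse[OF mat_adjoint_carrier[OF assms(1)] assms])

lemma hermitian_unitary_conj: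
  fixes A U :: "complex mat"
  assumes A: "A \<in> carrier_mat n n" and H: "mat_adjoint A = A" and U: "U \<in> carrier_mat n n"
  shows "mat_adjoint (mat_adjoint U * A * U) = mat_adjoint U * A * U"
proof -
  have UH: "mat_adjoint U \<in> carrier_mat n n" using U by simp
  have "mat_adjoint (mat_adjoint U * A * U) = mat_adjoint U * mat_adjoint (mat_adjoint U * A)"
    by (rule mat_adjoint_mult[OF mult_carrier_mat[OF UH A] U])
  also have "mat_adjoint (mat_adjoint U * A) = A * U"
    using mat_adjoint_mult[OF UH A] H by simp
  finally show ?thesis using assoc_mult_mat[OF UH A U] by simp
qed

lemma eigenvalue_unitary_conj:
  fixes A U :: "complex mat"
  assumes A: "A \<in> carrier_mat n n" and U: "U \<in> carrier_mat n n" and UU: "mat_adjoint U * U = 1\<^sub>m n"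
    and ev: "eigenvalue (mat_adjoint U * A * U) k"
  shows "eigenvalue A k"
proof -
  have "similar_mat_wit (mat_adjoint U * A * U) A (mat_adjoint U) U"
    using A U UU unitary_right_inverse[OF U UU]
    by (intro similar_mat_witI[of _ _ n] mult_carrier_mat[of _ n n]) auto
  then have "similar_mat (mat_adjoint U * A * U) A" unfolding similar_mat_def by blast
  then have "char_poly (mat_adjoint U * A * U) = char_poly A" by (rule char_poly_similar)
  moreover have "mat_adjoint U * A * U \<in> carrier_mat n n"
    using A U by (intro mult_carrier_mat[of _ n n]) auto
  ultimately show ?thesis
    using ev eigenvalue_root_char_poly[OF A] eigenvalue_root_char_poly[of "mat_adjoint U * A * U" n]
    by simp
qed

lemma unitary_change_of_variables:
  fixes A U :: "complex mat"
  assumes A: "A \<in> carrier_mat n n" and U: "U \<in> carrier_mat n n"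
    and UU: "mat_adjoint U * U = 1\<^sub>m n" and y: "y \<in> carrier_vec n"
  defines "z \<equiv> mat_adjoint U *\<^sub>v y"
  shows "conjugate y \<bullet> (A *\<^sub>v y) = conjugate z \<bullet> ((mat_adjoint U * A * U) *\<^sub>v z)"
    and "sq_norm_cvec y = sq_norm_cvec z"
proof -
  have UH: "mat_adjoint U \<in> carrier_mat n n" using U by simp
  have z: "z \<in> carrier_vec n" unfolding z_def using UH y by simp
  have yz: "y = U *\<^sub>v z"
    unfolding z_def using assoc_mult_mat_vec[OF U UH y] unitary_right_inverse[OF U UU] y by simp
  have "conjugate y \<bullet> (A *\<^sub>v y) = conjugate z \<bullet> (mat_adjoint U *\<^sub>v (A *\<^sub>v (U *\<^sub>v z)))"
    unfolding yz using scalar_prod_mat_adjoint[OF U z, of "A *\<^sub>v (U *\<^sub>v z)"] A U z by simp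
  also have "mat_adjoint U *\<^sub>v (A *\<^sub>v (U *\<^sub>v z)) = (mat_adjoint U * A * U) *\<^sub>v z"
    using assoc_mult_mat_vec[OF mult_carrier_mat[OF UH A] U z] assoc_mult_mat_vec[OF UH A, of "U *\<^sub>v z"]
      A U z by simp
  finally show "conjugate y \<bullet> (A *\<^sub>v y) = conjugate z \<bullet> ((mat_adjoint U * A * U) *\<^sub>v z)" .
  have "complex_of_real (sq_norm_cvec y) = conjugate z \<bullet> (mat_adjoint U *\<^sub>v (U *\<^sub>v z))"
    unfolding yz conjugate_scalar_prod_self[symmetric]
    using scalar_prod_mat_adjoint[OF U z, of "U *\<^sub>v z"] U z by simp
  also have "mat_adjoint U *\<^sub>v (U *\<^sub>v z) = z" using assoc_mult_mat_vec[OF UH U z] UU z by simp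
  finally show "sq_norm_cvec y = sq_norm_cvec z" by (simp add: conjugate_scalar_prod_self)
qed

lemma hermitian_real_eigenvector:
  fixes A :: "complex mat"
  assumes A: "A \<in> carrier_mat n n" and H: "mat_adjoint A = A" and n: "0 < n"
  obtains e v where "eigenvector A v (complex_of_real e)"
proof -
  have "degree (char_poly A) = n" using degree_monic_char_poly[OF A] by simp
  then have "\<not> constant (poly (char_poly A))" using n by (simp add: constant_degree)
  from fundamental_theorem_of_algebra[OF this] obtain e where "poly (char_poly A) e = 0" by auto
  then obtain v where ev: "eigenvector A v e"
    using eigenvalue_root_char_poly[OF A] unfolding eigenvalue_def by auto
  then have v: "v \<in> carrier_vec n" "v \<noteq> 0\<^sub>v n" and Av: "A *\<^sub>v v = e \<cdot>\<^sub>v v"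
    using A unfolding eigenvector_def by auto
  have "e * complex_of_real (sq_norm_cvec v) = conjugate v \<bullet> (A *\<^sub>v v)"
    using v Av by (simp add: conjugate_scalar_prod_self)
  also have "\<dots> = conjugate (A *\<^sub>v v) \<bullet> v"
    using scalar_prod_mat_adjoint[OF A v(1) v(1)] H by simp
  also have "\<dots> = cnj e * complex_of_real (sq_norm_cvec v)"
    using v Av by (simp add: conjugate_smult_vec conjugate_scalar_prod_self)
  finally have "cnj e = e" using sq_norm_cvec_pos[OF v] by simp
  then have "e = complex_of_real (Re e)" by (simp add: complex_eq_iff)
  with ev that show ?thesis by metis
qed

lemma hermitian_unitary_deflation:
  fixes A :: "complex mat"
  assumes A: "A \<in> carrier_mat n n" and H: "mat_adjoint A = A" and n: "0 < n"
  obtains e U where "eigenvalue A (complex_of_real e)" "U \<in> carrier_mat n n" "mat_adjoint U * U = 1\<^sub>m n"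
    "\<And>i. i < n \<Longrightarrow> (mat_adjoint U * A * U) $$ (i,0) = (if i = 0 then complex_of_real e else 0)"
    "\<And>j. j < n \<Longrightarrow> (mat_adjoint U * A * U) $$ (0,j) = (if j = 0 then complex_of_real e else 0)"
proof -
  obtain e v where ev: "eigenvector A v (complex_of_real e)"
    using hermitian_real_eigenvector[OF A H n] by blast
  then have v: "v \<in> carrier_vec n" "v \<noteq> 0\<^sub>v n" and Av: "A *\<^sub>v v = complex_of_real e \<cdot>\<^sub>v v"
    using A unfolding eigenvector_def by auto
  obtain U c where U: "U \<in> carrier_mat n n" and UU: "mat_adjoint U * U = 1\<^sub>m n"
    and cU: "col U 0 = c \<cdot>\<^sub>v v"
    using unitary_completion[OF v] by blast
  have UH: "mat_adjoint U \<in> carrier_mat n n" using U by simp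
  have AU: "A *\<^sub>v col U 0 = complex_of_real e \<cdot>\<^sub>v col U 0"
    using cU mult_mat_vec[OF A v(1), of c] Av by (simp add: smult_smult_assoc mult.commute)
  have col0: "(mat_adjoint U * A * U) $$ (i,0) = (if i = 0 then complex_of_real e else 0)"
    if i: "i < n" for i
  proof -
    have "(mat_adjoint U * A * U) $$ (i,0) = (mat_adjoint U * (A * U)) $$ (i,0)"
      using assoc_mult_mat[OF UH A U] by simp
    also have "\<dots> = row (mat_adjoint U) i \<bullet> col (A * U) 0"
      using UH A U i n by simp
    also have "col (A * U) 0 = complex_of_real e \<cdot>\<^sub>v col U 0"
      using col_mult2[OF A U n] AU by simp
    also have "row (mat_adjoint U) i \<bullet> (complex_of_real e \<cdot>\<^sub>v col U 0) =
        complex_of_real e * (mat_adjoint U * U) $$ (i,0)"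
      using U UH i n by simp
    finally show ?thesis using UU i n by simp
  qed
  have A': "mat_adjoint U * A * U \<in> carrier_mat n n"
    using A U by (intro mult_carrier_mat[of _ n n]) auto
  have "(mat_adjoint U * A * U) $$ (0,j) = (if j = 0 then complex_of_real e else 0)"
    if j: "j < n" for j
    using hermitian_index[OF A' hermitian_unitary_conj[OF A H U] n j] col0[OF j] by auto
  with ev U UU col0 that show ?thesis unfolding eigenvalue_def by blast
qed

lemma quadratic_form_split_first:
  fixes A :: "complex mat"
  assumes A: "A \<in> carrier_mat (Suc m) (Suc m)"
    and col0: "\<And>i. i < Suc m \<Longrightarrow> A $$ (i,0) = (if i = 0 then e else 0)"
    and row0: "\<And>j. j < Suc m \<Longrightarrow> A $$ (0,j) = (if j = 0 then e else 0)"
    and z: "z \<in> carrier_vec (Suc m)"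
  shows "conjugate z \<bullet> (A *\<^sub>v z) = cnj (z $ 0) * e * z $ 0 +
    conjugate (vec m (\<lambda>i. z $ Suc i)) \<bullet>
      (mat m m (\<lambda>(i,j). A $$ (Suc i, Suc j)) *\<^sub>v vec m (\<lambda>i. z $ Suc i))"
proof -
  have row_z: "row A i \<bullet> z = A $$ (i,0) * z $ 0 + (\<Sum>j<m. A $$ (i, Suc j) * z $ Suc j)"
    if "i < Suc m" for i
    using A z that
    by (simp add: scalar_prod_def atLeast0LessThan sum.lessThan_Suc_shift del: sum.lessThan_Suc)
  have "conjugate z \<bullet> (A *\<^sub>v z) = (\<Sum>i<Suc m. cnj (z $ i) * (row A i \<bullet> z))"
    using A z by (simp add: scalar_prod_def atLeast0LessThan)
  also have "\<dots> = cnj (z $ 0) * (row A 0 \<bullet> z) + (\<Sum>i<m. cnj (z $ Suc i) * (row A (Suc i) \<bullet> z))"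
    by (rule sum.lessThan_Suc_shift)
  also have "row A 0 \<bullet> z = e * z $ 0" using row_z[of 0] row0 by simp
  also have "(\<Sum>i<m. cnj (z $ Suc i) * (row A (Suc i) \<bullet> z)) =
      (\<Sum>i<m. cnj (z $ Suc i) * (\<Sum>j<m. A $$ (Suc i, Suc j) * z $ Suc j))"
    by (intro sum.cong refl, subst row_z) (auto simp: col0)
  also have "\<dots> = conjugate (vec m (\<lambda>i. z $ Suc i)) \<bullet>
      (mat m m (\<lambda>(i,j). A $$ (Suc i, Suc j)) *\<^sub>v vec m (\<lambda>i. z $ Suc i))"
    by (simp add: scalar_prod_def atLeast0LessThan row_def)
  finally show ?thesis by (simp add: mult.assoc)
qed

lemma sq_norm_cvec_split_first:
  "z \<in> carrier_vec (Suc m) \<Longrightarrow> sq_norm_cvec z = (cmod (z $ 0))\<^sup>2 + sq_norm_cvec (vec m (\<lambda>i. z $ Suc i))"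
  by (simp add: sq_norm_cvec_def sum.lessThan_Suc_shift del: sum.lessThan_Suc)

lemma eigenvalue_extend_first:
  fixes A :: "complex mat"
  assumes A: "A \<in> carrier_mat (Suc m) (Suc m)"
    and row0: "\<And>j. j < Suc m \<Longrightarrow> A $$ (0,j) = (if j = 0 then e else 0)"
    and ev: "eigenvalue (mat m m (\<lambda>(i,j). A $$ (Suc i, Suc j))) k"
  shows "eigenvalue A k"
proof -
  let ?A3 = "mat m m (\<lambda>(i,j). A $$ (Suc i, Suc j))"
  obtain u where u: "u \<in> carrier_vec m" and u0: "u \<noteq> 0\<^sub>v m" and Au: "?A3 *\<^sub>v u = k \<cdot>\<^sub>v u"
    using ev unfolding eigenvalue_def eigenvector_def by auto
  define w where "w = vec (Suc m) (\<lambda>i. if i = 0 then 0 else u $ (i - 1))"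
  have w: "w \<in> carrier_vec (Suc m)" unfolding w_def by simp
  have "w \<noteq> 0\<^sub>v (Suc m)"
  proof
    assume "w = 0\<^sub>v (Suc m)"
    moreover have "u $ i = w $ Suc i" if "i < m" for i using that by (simp add: w_def)
    ultimately have "u = 0\<^sub>v m" using u by (intro eq_vecI) auto
    with u0 show False by simp
  qed
  moreover have "A *\<^sub>v w = k \<cdot>\<^sub>v w"
  proof (rule eq_vecI)
    fix i assume "i < dim_vec (k \<cdot>\<^sub>v w)"
    then have i: "i < Suc m" unfolding w_def by simp
    have Aw: "row A i \<bullet> w = (\<Sum>j<m. A $$ (i, Suc j) * u $ j)"
      using A i u
      by (simp add: scalar_prod_def atLeast0LessThan sum.lessThan_Suc_shift w_def del: sum.lessThan_Suc)
    show "(A *\<^sub>v w) $ i = (k \<cdot>\<^sub>v w) $ i"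
    proof (cases i)
      case 0
      then show ?thesis using A Aw row0 by (simp add: w_def)
    next
      case (Suc i')
      have "(?A3 *\<^sub>v u) $ i' = (\<Sum>j<m. A $$ (i, Suc j) * u $ j)"
        using Suc i u by (simp add: scalar_prod_def atLeast0LessThan row_def)
      then show ?thesis using A Aw Suc i u Au by (simp add: w_def)
    qed
  qed (use A in \<open>simp add: w_def\<close>)
  ultimately show ?thesis using A w unfolding eigenvalue_def eigenvector_def by auto
qed

lemma hermitian_lower_block:
  fixes A :: "complex mat"
  assumes A: "A \<in> carrier_mat (Suc m) (Suc m)" and H: "mat_adjoint A = A"
  shows "mat_adjoint (mat m m (\<lambda>(i,j). A $$ (Suc i, Suc j))) = mat m m (\<lambda>(i,j). A $$ (Suc i, Suc j))"
proof (rule eq_matI)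
  fix i j assume "i < dim_row (mat m m (\<lambda>(i,j). A $$ (Suc i, Suc j)))"
    and "j < dim_col (mat m m (\<lambda>(i,j). A $$ (Suc i, Suc j)))"
  then show "mat_adjoint (mat m m (\<lambda>(i,j). A $$ (Suc i, Suc j))) $$ (i,j) =
      mat m m (\<lambda>(i,j). A $$ (Suc i, Suc j)) $$ (i,j)"
    using hermitian_index[OF A H, of "Suc i" "Suc j"] by simp
qed auto

lemma rayleigh_bound_deflated:
  fixes A :: "complex mat"
  assumes A: "A \<in> carrier_mat (Suc m) (Suc m)"
    and col0: "\<And>i. i < Suc m \<Longrightarrow> A $$ (i,0) = (if i = 0 then complex_of_real e else 0)"
    and row0: "\<And>j. j < Suc m \<Longrightarrow> A $$ (0,j) = (if j = 0 then complex_of_real e else 0)"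
    and sub: "\<And>y. y \<in> carrier_vec m \<Longrightarrow>
      \<mu> * sq_norm_cvec y \<le> Re (conjugate y \<bullet> (mat m m (\<lambda>(i,j). A $$ (Suc i, Suc j)) *\<^sub>v y))"
    and z: "z \<in> carrier_vec (Suc m)"
  shows "min e \<mu> * sq_norm_cvec z \<le> Re (conjugate z \<bullet> (A *\<^sub>v z))"
proof -
  define z' where "z' = vec m (\<lambda>i. z $ Suc i)"
  have "min e \<mu> * sq_norm_cvec z = min e \<mu> * (cmod (z $ 0))\<^sup>2 + min e \<mu> * sq_norm_cvec z'"
    unfolding z'_def sq_norm_cvec_split_first[OF z] by (simp add: algebra_simps)
  also have "\<dots> \<le> e * (cmod (z $ 0))\<^sup>2 + \<mu> * sq_norm_cvec z'"
    by (intro add_mono mult_right_mono) (auto simp: sq_norm_cvec_nonneg)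
  also have "\<dots> \<le> Re (cnj (z $ 0) * complex_of_real e * z $ 0) +
      Re (conjugate z' \<bullet> (mat m m (\<lambda>(i,j). A $$ (Suc i, Suc j)) *\<^sub>v z'))"
    using sub[of z'] unfolding cmod_power2 z'_def by (simp add: algebra_simps power2_eq_square)
  also have "\<dots> = Re (conjugate z \<bullet> (A *\<^sub>v z))"
    using quadratic_form_split_first[OF A col0 row0 z] unfolding z'_def by simp
  finally show ?thesis .
qed

lemma hermitian_rayleigh_lower_bound:
  fixes A :: "complex mat"
  assumes "A \<in> carrier_mat n n" "mat_adjoint A = A" "0 < n"
  shows "\<exists>\<mu>. eigenvalue A (complex_of_real \<mu>) \<and>
    (\<forall>y\<in>carrier_vec n. \<mu> * sq_norm_cvec y \<le> Re (conjugate y \<bullet> (A *\<^sub>v y)))"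
  using assms
proof (induction n arbitrary: A)
  case (Suc m A)
  note A = Suc.prems(1) and H = Suc.prems(2)
  obtain e U where ev: "eigenvalue A (complex_of_real e)"
    and U: "U \<in> carrier_mat (Suc m) (Suc m)" and UU: "mat_adjoint U * U = 1\<^sub>m (Suc m)"
    and col0: "\<And>i. i < Suc m \<Longrightarrow> (mat_adjoint U * A * U) $$ (i,0) = (if i = 0 then complex_of_real e else 0)"
    and row0: "\<And>j. j < Suc m \<Longrightarrow> (mat_adjoint U * A * U) $$ (0,j) = (if j = 0 then complex_of_real e else 0)"
    using hermitian_unitary_deflation[OF A H] by blast
  define A' where "A' = mat_adjoint U * A * U"
  have A': "A' \<in> carrier_mat (Suc m) (Suc m)"
    unfolding A'_def using A U by (intro mult_carrier_mat[of _ "Suc m" "Suc m"]) auto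
  have H': "mat_adjoint A' = A'" unfolding A'_def by (rule hermitian_unitary_conj[OF A H U])
  define A3 where "A3 = mat m m (\<lambda>(i,j). A' $$ (Suc i, Suc j))"
  have H3: "mat_adjoint A3 = A3" unfolding A3_def by (rule hermitian_lower_block[OF A' H'])
  obtain \<mu> where eig3: "\<mu> = e \<or> eigenvalue A3 (complex_of_real \<mu>)"
    and R3: "\<And>y. y \<in> carrier_vec m \<Longrightarrow> \<mu> * sq_norm_cvec y \<le> Re (conjugate y \<bullet> (A3 *\<^sub>v y))"
  proof (cases "m = 0")
    case True
    \<comment> \<open>the lower block is empty; \<open>\<mu> = e\<close> keeps \<open>min e \<mu>\<close> an eigenvalue\<close>
    then show ?thesis using that[of e] by (auto simp: sq_norm_cvec_def scalar_prod_def)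
  next
    case False
    then show ?thesis using Suc.IH[of A3] H3 that by (auto simp: A3_def)
  qed
  have "eigenvalue A (complex_of_real \<mu>)" if "\<mu> \<noteq> e"
  proof -
    have "eigenvalue A' (complex_of_real \<mu>)"
      using eig3 that eigenvalue_extend_first[OF A'] row0 unfolding A3_def A'_def by blast
    then show ?thesis unfolding A'_def by (rule eigenvalue_unitary_conj[OF A U UU])
  qed
  then have "eigenvalue A (complex_of_real (min e \<mu>))" using ev by (cases "\<mu> = e") (auto simp: min_def)
  moreover have "min e \<mu> * sq_norm_cvec y \<le> Re (conjugate y \<bullet> (A *\<^sub>v y))"
    if y: "y \<in> carrier_vec (Suc m)" for y
    using rayleigh_bound_deflated[OF A' col0[folded A'_def] row0[folded A'_def] R3[unfolded A3_def]]
      unitary_change_of_variables[OF A U UU y] mult_mat_vec_carrier[OF mat_adjoint_carrier[OF U] y]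
    by (simp add: A'_def)
  ultimately show ?case by blast
qed simp

lemma finite_real_eigenvalues:
  fixes A :: "complex mat"
  assumes A: "A \<in> carrier_mat n n"
  shows "finite {x::real. eigenvalue A (complex_of_real x)}"
proof -
  have p: "char_poly A \<noteq> 0" using degree_monic_char_poly[OF A] by auto
  have "{x::real. eigenvalue A (complex_of_real x)} = complex_of_real -` {z. poly (char_poly A) z = 0}"
    using eigenvalue_root_char_poly[OF A] by auto
  also have "finite \<dots>"
    by (rule finite_vimageI[OF poly_roots_finite[OF p]]) (simp add: inj_def)
  finally show ?thesis .
qed

lemma hermitian_min_eigenvalue:
  fixes A :: "complex mat"
  assumes A: "A \<in> carrier_mat n n" and H: "mat_adjoint A = A" and n: "0 < n"
  shows "eigenvalue A (complex_of_real (min_eigenvalue A))"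
    and "y \<in> carrier_vec n \<Longrightarrow> min_eigenvalue A * sq_norm_cvec y \<le> Re (conjugate y \<bullet> (A *\<^sub>v y))"
proof -
  obtain \<mu> where eig: "eigenvalue A (complex_of_real \<mu>)"
    and R: "\<forall>y\<in>carrier_vec n. \<mu> * sq_norm_cvec y \<le> Re (conjugate y \<bullet> (A *\<^sub>v y))"
    using hermitian_rayleigh_lower_bound[OF A H n] by blast
  show "eigenvalue A (complex_of_real (min_eigenvalue A))"
    using Min_in[OF finite_real_eigenvalues[OF A]] eig unfolding min_eigenvalue_def by auto
  have "min_eigenvalue A \<le> \<mu>"
    using Min_le[OF finite_real_eigenvalues[OF A]] eig unfolding min_eigenvalue_def by simp
  then show "min_eigenvalue A * sq_norm_cvec y \<le> Re (conjugate y \<bullet> (A *\<^sub>v y))"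
    if "y \<in> carrier_vec n"
    using R that mult_right_mono[OF _ sq_norm_cvec_nonneg] by (meson order_trans)
qed

lemma psd_eigenvalue_nonneg:
  fixes A :: "complex mat"
  assumes A: "A \<in> carrier_mat n n"
    and psd: "\<And>v. v \<in> carrier_vec n \<Longrightarrow> Re (conjugate v \<bullet> (A *\<^sub>v v)) \<ge> 0"
    and eig: "eigenvalue A (complex_of_real \<mu>)"
  shows "\<mu> \<ge> 0"
proof -
  obtain u where u: "u \<in> carrier_vec n" "u \<noteq> 0\<^sub>v n" and Au: "A *\<^sub>v u = complex_of_real \<mu> \<cdot>\<^sub>v u"
    using eig A unfolding eigenvalue_def eigenvector_def by auto
  have "Re (conjugate u \<bullet> (A *\<^sub>v u)) = \<mu> * sq_norm_cvec u"
    unfolding Au using u by (simp add: conjugate_scalar_prod_self)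
  with psd[OF u(1)] sq_norm_cvec_pos[OF u] show ?thesis by (simp add: zero_le_mult_iff)
qed

section \<open>Regularized solutions for a positive semidefinite matrix\<close>

lemma mat_inv_pos_def:
  fixes A :: "complex mat"
  assumes A: "A \<in> carrier_mat n n"
    and pd: "\<And>v. v \<in> carrier_vec n \<Longrightarrow> v \<noteq> 0\<^sub>v n \<Longrightarrow> Re (conjugate v \<bullet> (A *\<^sub>v v)) > 0"
  shows "mat_inv A \<in> carrier_mat n n \<and> A * mat_inv A = 1\<^sub>m n \<and> mat_inv A * A = 1\<^sub>m n"
proof -
  have "det A \<noteq> 0"
  proof
    assume "det A = 0"
    then obtain v where "v \<in> carrier_vec n" "v \<noteq> 0\<^sub>v n" "A *\<^sub>v v = 0\<^sub>v n"
      using det_0_iff_vec_prod_zero[OF A] by auto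
    with pd show False by fastforce
  qed
  then have "A \<in> Units (ring_mat TYPE(complex) n undefined)"
    by (rule det_non_zero_imp_unit[OF A])
  then obtain B where "mat_inverse A = Some B"
    using mat_inverse(1)[OF A, of undefined] by (cases "mat_inverse A") auto
  with mat_inverse(2)[OF A] A
  have "\<exists>B. B \<in> carrier_mat (dim_row A) (dim_row A) \<and> inverts_mat A B \<and> inverts_mat B A"
    by (auto simp: inverts_mat_def)
  from someI_ex[OF this] A show ?thesis
    unfolding mat_inv_def inverts_mat_def by auto
qed

lemma mat_inv_mult_vec_iff:
  fixes B :: "complex mat"
  assumes B: "B \<in> carrier_mat n n"
    and inv: "mat_inv B \<in> carrier_mat n n \<and> B * mat_inv B = 1\<^sub>m n \<and> mat_inv B * B = 1\<^sub>m n"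
    and x: "x \<in> carrier_vec n" and y: "y \<in> carrier_vec n"
  shows "y = mat_inv B *\<^sub>v x \<longleftrightarrow> B *\<^sub>v y = x"
proof
  assume "y = mat_inv B *\<^sub>v x"
  then show "B *\<^sub>v y = x"
    using assoc_mult_mat_vec[of B n n "mat_inv B" n x] B inv x by simp
next
  assume "B *\<^sub>v y = x"
  then show "y = mat_inv B *\<^sub>v x"
    using assoc_mult_mat_vec[of "mat_inv B" n n B n y] B inv y by simp
qed

lemma mat_inv_gram_plus_pos_def:
  fixes W K :: "complex mat"
  assumes W: "W \<in> carrier_mat r n" and K: "hermitian_pd K n"
  shows "mat_inv (mat_adjoint W * W + K) \<in> carrier_mat n n"
proof -
  have WW: "mat_adjoint W * W \<in> carrier_mat n n" using gram_carrier[OF W] .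
  have Kc: "K \<in> carrier_mat n n" using K unfolding hermitian_pd_def by simp
  show ?thesis
  proof (rule conjunct1[OF mat_inv_pos_def])
    fix v :: "complex vec" assume v: "v \<in> carrier_vec n" and v0: "v \<noteq> 0\<^sub>v n"
    have "Re (conjugate v \<bullet> ((mat_adjoint W * W + K) *\<^sub>v v)) =
        sq_norm_cvec (W *\<^sub>v v) + Re (conjugate v \<bullet> (K *\<^sub>v v))"
      using WW Kc v gram_quadratic_form[OF W v]
      by (simp add: add_mult_distrib_mat_vec[OF WW Kc v] scalar_prod_add_distrib[of _ n])
    with K v v0 sq_norm_cvec_nonneg[of "W *\<^sub>v v"]
    show "Re (conjugate v \<bullet> ((mat_adjoint W * W + K) *\<^sub>v v)) > 0"
      unfolding hermitian_pd_def by (simp add: add_nonneg_pos)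
  qed (use WW Kc in simp)
qed

lemma mult_mat_vec_shift:
  fixes A :: "complex mat"
  assumes A: "A \<in> carrier_mat n n" and v: "v \<in> carrier_vec n"
  shows "(A + c \<cdot>\<^sub>m 1\<^sub>m n) *\<^sub>v v = A *\<^sub>v v + c \<cdot>\<^sub>v v"
proof (rule eq_vecI)
  fix i assume "i < dim_vec (A *\<^sub>v v + c \<cdot>\<^sub>v v)"
  then have i: "i < n" using A v by simp
  have "row (c \<cdot>\<^sub>m 1\<^sub>m n) i = c \<cdot>\<^sub>v unit_vec n i" using i by (intro eq_vecI) auto
  then have "row (c \<cdot>\<^sub>m 1\<^sub>m n) i \<bullet> v = c * v $ i" using i v by simp
  then show "((A + c \<cdot>\<^sub>m 1\<^sub>m n) *\<^sub>v v) $ i = (A *\<^sub>v v + c \<cdot>\<^sub>v v) $ i"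
    using A v i by simp (subst add_scalar_prod_distrib[of _ n], auto)
qed (use A v in auto)

lemma quadratic_form_shift:
  fixes A :: "complex mat"
  assumes A: "A \<in> carrier_mat n n" and v: "v \<in> carrier_vec n"
  shows "Re (conjugate v \<bullet> ((A + complex_of_real l \<cdot>\<^sub>m 1\<^sub>m n) *\<^sub>v v)) =
    Re (conjugate v \<bullet> (A *\<^sub>v v)) + l * sq_norm_cvec v"
  using A v by (simp add: mult_mat_vec_shift scalar_prod_add_distrib[of _ n] conjugate_scalar_prod_self)

lemma regularized_solution:
  fixes A :: "complex mat"
  assumes A: "A \<in> carrier_mat n n"
    and psd: "\<And>v. v \<in> carrier_vec n \<Longrightarrow> Re (conjugate v \<bullet> (A *\<^sub>v v)) \<ge> 0"
    and l: "0 < l" and x: "x \<in> carrier_vec n"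
  defines "y \<equiv> mat_inv (A + complex_of_real l \<cdot>\<^sub>m 1\<^sub>m n) *\<^sub>v x"
  shows "y \<in> carrier_vec n" and "A *\<^sub>v y + complex_of_real l \<cdot>\<^sub>v y = x"
proof -
  let ?B = "A + complex_of_real l \<cdot>\<^sub>m 1\<^sub>m n"
  have B: "?B \<in> carrier_mat n n" using A by simp
  have inv: "mat_inv ?B \<in> carrier_mat n n \<and> ?B * mat_inv ?B = 1\<^sub>m n \<and> mat_inv ?B * ?B = 1\<^sub>m n"
  proof (rule mat_inv_pos_def[OF B])
    fix v :: "complex vec" assume "v \<in> carrier_vec n" "v \<noteq> 0\<^sub>v n"
    with psd l sq_norm_cvec_pos show "Re (conjugate v \<bullet> (?B *\<^sub>v v)) > 0"
      by (simp add: quadratic_form_shift[OF A] add_nonneg_pos)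
  qed
  then show y: "y \<in> carrier_vec n" unfolding y_def using x by auto
  have "?B *\<^sub>v y = x" using mat_inv_mult_vec_iff[OF B inv x y] y_def by simp
  then show "A *\<^sub>v y + complex_of_real l \<cdot>\<^sub>v y = x" using mult_mat_vec_shift[OF A y] by simp
qed

lemma shifted_system_difference:
  fixes A :: "complex mat"
  assumes A: "A \<in> carrier_mat n n" and y1: "y1 \<in> carrier_vec n" and y2: "y2 \<in> carrier_vec n"
    and eq1: "A *\<^sub>v y1 + complex_of_real l1 \<cdot>\<^sub>v y1 = x"
    and eq2: "A *\<^sub>v y2 + complex_of_real l2 \<cdot>\<^sub>v y2 = x"
  shows "A *\<^sub>v (y1 - y2) + complex_of_real l1 \<cdot>\<^sub>v (y1 - y2) = complex_of_real (l2 - l1) \<cdot>\<^sub>v y2"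
proof (rule eq_vecI)
  fix i assume "i < dim_vec (complex_of_real (l2 - l1) \<cdot>\<^sub>v y2)"
  then have i: "i < n" using y2 by simp
  have "(A *\<^sub>v y1) $ i + l1 * y1 $ i = (A *\<^sub>v y2) $ i + l2 * y2 $ i"
    using arg_cong[OF eq1, of "\<lambda>v. v $ i"] arg_cong[OF eq2, of "\<lambda>v. v $ i"] A y1 y2 i by simp
  moreover have "(A *\<^sub>v (y1 - y2)) $ i = (A *\<^sub>v y1) $ i - (A *\<^sub>v y2) $ i"
    using mult_minus_distrib_mat_vec[OF A y1 y2] A y1 y2 i by simp
  ultimately show "(A *\<^sub>v (y1 - y2) + complex_of_real l1 \<cdot>\<^sub>v (y1 - y2)) $ i =
      (complex_of_real (l2 - l1) \<cdot>\<^sub>v y2) $ i"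
    using A y1 y2 i by (simp add: algebra_simps)
qed (use A y2 in simp)

lemma regularized_solution_sq_norm_antimono:
  fixes A :: "complex mat"
  assumes A: "A \<in> carrier_mat n n"
    and psd: "\<And>v. v \<in> carrier_vec n \<Longrightarrow> Re (conjugate v \<bullet> (A *\<^sub>v v)) \<ge> 0"
    and x: "x \<in> carrier_vec n" and l1: "0 < l1" and l12: "l1 \<le> l2"
  shows "sq_norm_cvec (mat_inv (A + complex_of_real l2 \<cdot>\<^sub>m 1\<^sub>m n) *\<^sub>v x)
    \<le> sq_norm_cvec (mat_inv (A + complex_of_real l1 \<cdot>\<^sub>m 1\<^sub>m n) *\<^sub>v x)"
proof -
  define y1 where "y1 = mat_inv (A + complex_of_real l1 \<cdot>\<^sub>m 1\<^sub>m n) *\<^sub>v x"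
  define y2 where "y2 = mat_inv (A + complex_of_real l2 \<cdot>\<^sub>m 1\<^sub>m n) *\<^sub>v x"
  have y1: "y1 \<in> carrier_vec n" and eq1: "A *\<^sub>v y1 + complex_of_real l1 \<cdot>\<^sub>v y1 = x"
    unfolding y1_def using regularized_solution[OF A psd l1 x] by auto
  have y2: "y2 \<in> carrier_vec n" and eq2: "A *\<^sub>v y2 + complex_of_real l2 \<cdot>\<^sub>v y2 = x"
    unfolding y2_def using regularized_solution[OF A psd _ x] l1 l12 by auto
  define w where "w = y1 - y2"
  have w: "w \<in> carrier_vec n" unfolding w_def using y1 y2 by simp
  have Aw: "A *\<^sub>v w + complex_of_real l1 \<cdot>\<^sub>v w = complex_of_real (l2 - l1) \<cdot>\<^sub>v y2"
    unfolding w_def by (rule shifted_system_difference[OF A y1 y2 eq1 eq2])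
  have "(l2 - l1) * Re (conjugate y2 \<bullet> w) = Re (conjugate w \<bullet> (A *\<^sub>v w)) + l1 * sq_norm_cvec w"
  proof -
    have "(l2 - l1) * Re (conjugate y2 \<bullet> w) = Re (conjugate (complex_of_real (l2 - l1) \<cdot>\<^sub>v y2) \<bullet> w)"
      using y2 w by (simp add: conjugate_smult_vec)
    also have "\<dots> = Re (conjugate w \<bullet> (A *\<^sub>v w + complex_of_real l1 \<cdot>\<^sub>v w))"
      unfolding Aw[symmetric] using A w by (intro Re_conjugate_scalar_prod_commute[of _ n]) auto
    also have "\<dots> = Re (conjugate w \<bullet> (A *\<^sub>v w)) + l1 * sq_norm_cvec w"
      using A w by (simp add: scalar_prod_add_distrib[of _ n] conjugate_scalar_prod_self)
    finally show ?thesis .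
  qed
  then have "Re (conjugate y2 \<bullet> w) \<ge> 0" if "l1 < l2"
    using psd[OF w] sq_norm_cvec_nonneg[of w] l1 that
    by (smt (verit) mult_nonneg_nonneg zero_le_mult_iff)
  moreover have "y1 = y2 + complex_of_real 1 \<cdot>\<^sub>v w" unfolding w_def using y1 y2 by auto
  ultimately have "l1 < l2 \<Longrightarrow> sq_norm_cvec y2 \<le> sq_norm_cvec y1"
    using sq_norm_cvec_add_smult[OF y2 w, of 1] sq_norm_cvec_nonneg[of w] by simp
  then show ?thesis using l12 unfolding y1_def y2_def by fastforce
qed

lemma regularized_solution_bound:
  fixes A :: "complex mat"
  assumes A: "A \<in> carrier_mat n n" and H: "mat_adjoint A = A"
    and psd: "\<And>v. v \<in> carrier_vec n \<Longrightarrow> Re (conjugate v \<bullet> (A *\<^sub>v v)) \<ge> 0"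
    and x: "x \<in> carrier_vec n" and l: "0 < l" and tau: "0 < \<tau>"
    and norm: "sq_norm_cvec (mat_inv (A + complex_of_real l \<cdot>\<^sub>m 1\<^sub>m n) *\<^sub>v x) = \<tau>"
  shows "l \<le> sqrt (sq_norm_cvec x / \<tau>) - min_eigenvalue A"
proof -
  define y where "y = mat_inv (A + complex_of_real l \<cdot>\<^sub>m 1\<^sub>m n) *\<^sub>v x"
  have y: "y \<in> carrier_vec n" and xy: "x = A *\<^sub>v y + complex_of_real l \<cdot>\<^sub>v y"
    unfolding y_def using regularized_solution[OF A psd l x] by auto
  have sy: "sq_norm_cvec y = \<tau>" using norm unfolding y_def .
  have n: "0 < n"
    using y sy tau by (cases n) (auto simp: sq_norm_cvec_def)
  define \<mu> where "\<mu> = min_eigenvalue A"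
  have \<mu>: "0 \<le> \<mu>"
    unfolding \<mu>_def by (rule psd_eigenvalue_nonneg[OF A psd hermitian_min_eigenvalue(1)[OF A H n]])
  have Ay: "A *\<^sub>v y \<in> carrier_vec n" using A y by simp
  define r where "r = Re (conjugate (A *\<^sub>v y) \<bullet> y)"
  have r: "\<mu> * \<tau> \<le> r"
    using hermitian_min_eigenvalue(2)[OF A H n y] sy Re_conjugate_scalar_prod_commute[OF Ay y]
    unfolding r_def \<mu>_def by simp
  have x_expand: "sq_norm_cvec x = sq_norm_cvec (A *\<^sub>v y) + 2 * l * r + l\<^sup>2 * \<tau>"
    unfolding xy r_def sy[symmetric] by (rule sq_norm_cvec_add_smult[OF Ay y])
  have "sq_norm_cvec (A *\<^sub>v y + complex_of_real (- \<mu>) \<cdot>\<^sub>v y) = sq_norm_cvec (A *\<^sub>v y) - 2 * \<mu> * r + \<mu>\<^sup>2 * \<tau>"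
    unfolding r_def sy[symmetric] using sq_norm_cvec_add_smult[OF Ay y, of "- \<mu>"] by simp
  then have Ay_lower: "2 * \<mu> * r - \<mu>\<^sup>2 * \<tau> \<le> sq_norm_cvec (A *\<^sub>v y)"
    using sq_norm_cvec_nonneg[of "A *\<^sub>v y + complex_of_real (- \<mu>) \<cdot>\<^sub>v y"] by simp
  have "2 * (\<mu> + l) * (\<mu> * \<tau>) \<le> 2 * (\<mu> + l) * r"
    using r \<mu> l by (intro mult_left_mono) auto
  then have "(\<mu> + l)\<^sup>2 * \<tau> \<le> sq_norm_cvec x"
    using x_expand Ay_lower by (simp add: power2_eq_square algebra_simps)
  then have "(\<mu> + l)\<^sup>2 \<le> sq_norm_cvec x / \<tau>" using tau by (simp add: field_simps)
  then have "\<mu> + l \<le> sqrt (sq_norm_cvec x / \<tau>)" by (rule real_le_rsqrt)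
  then show ?thesis unfolding \<mu>_def by simp
qed

theorem lemma2:
  fixes N :: "nat \<Rightarrow> nat" and L :: nat
    and Z C :: "nat \<Rightarrow> complex mat" and K S :: "complex mat"
    and i :: nat and \<tau> :: real
  assumes i: "i \<in> {1, 2}"
    and Zpd: "\<And>j. j \<in> {1, 2} \<Longrightarrow> hermitian_pd (Z j) (N j)"
    and Cdim: "\<And>j. j \<in> {1, 2} \<Longrightarrow> C j \<in> carrier_mat (N j) (N j)"
    and ZC: "\<And>j. j \<in> {1, 2} \<Longrightarrow> Z j = C j * mat_adjoint (C j)"
    and Kpd: "hermitian_pd K L"
    and Sdim: "S \<in> carrier_mat (N 1 + N 2) L"
  defines "CH \<equiv> blkdiag (C 1) (C 2)"
  defines "T \<equiv> mat_adjoint CH * conj_mat S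
                 * mat_inv (transpose_mat S * CH * mat_adjoint CH * conj_mat S + K)"
  defines "Ti \<equiv> (if i = 1 then row_block T 0 (N 1) else row_block T (N 1) (N 2))"
  defines "X1 \<equiv> mat_adjoint T * mat_adjoint CH * CH * T"
  defines "X2 \<equiv> transpose_mat (Z i)"
  defines "x3 \<equiv> vec_mat (transpose_mat (mat_adjoint Ti * mat_adjoint (C i) * mat_adjoint (Z i)))"
  defines "s \<equiv> (\<lambda>lam::real. mat_inv (kron X1 X2 + complex_of_real lam \<cdot>\<^sub>m 1\<^sub>m (L * N i)) *\<^sub>v x3)"
  defines "g \<equiv> (\<lambda>lam::real. sq_norm_cvec (s lam))"
  shows "(\<forall>lam1 lam2. 0 < lam1 \<and> lam1 \<le> lam2 \<longrightarrow> g lam2 \<le> g lam1) \<and>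
         (\<forall>lam_i. lam_i > 0 \<and> \<tau> > 0 \<and> g lam_i = \<tau> \<longrightarrow>
            lam_i \<le> sqrt (sq_norm_cvec x3 / \<tau>) - min_eigenvalue (kron X1 X2))"
proof -
  have Ci: "C i \<in> carrier_mat (N i) (N i)" using Cdim[OF i] .
  have CH: "CH \<in> carrier_mat (N 1 + N 2) (N 1 + N 2)"
    unfolding CH_def blkdiag_def using Cdim[of 1] Cdim[of 2] by simp
  have W: "mat_adjoint CH * conj_mat S \<in> carrier_mat (N 1 + N 2) L"
    using mult_carrier_mat[OF mat_adjoint_carrier[OF CH] conj_mat_carrier[OF Sdim]] by simp
  have "mat_inv (transpose_mat S * CH * mat_adjoint CH * conj_mat S + K) \<in> carrier_mat L L"
    using mat_inv_gram_plus_pos_def[OF W Kpd] conj_mat_carrier[OF Sdim]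
      mat_adjoint_mult_self[OF mat_adjoint_carrier[OF CH], of "conj_mat S" L]
    by (simp add: mat_adjoint_conj_mat)
  then have T: "T \<in> carrier_mat (N 1 + N 2) L" unfolding T_def using W by simp
  have Zi: "Z i \<in> carrier_mat (N i) (N i)" using Zpd[OF i] unfolding hermitian_pd_def by simp
  have x3: "x3 \<in> carrier_vec (L * N i)"
    using T Zi i unfolding x3_def vec_mat_def Ti_def row_block_def by auto
  define G where "G = kron (CH * T) (transpose_mat (C i))"
  have G: "G \<in> carrier_mat ((N 1 + N 2) * N i) (L * N i)" unfolding G_def using CH T Ci by simp
  have gram: "kron X1 X2 = mat_adjoint G * G"
    unfolding X1_def X2_def G_def ZC[OF i] mat_adjoint_mult_self[OF CH T]
      transpose_mult_mat_adjoint[OF Ci]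
    by (rule kron_gram) (use CH T Ci in auto)
  show ?thesis unfolding g_def s_def gram
    using regularized_solution_sq_norm_antimono[OF gram_carrier[OF G] gram_psd[OF G] x3]
      regularized_solution_bound[OF gram_carrier[OF G] gram_hermitian[OF G] gram_psd[OF G] x3]
    by blast
qed

end
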